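(* Consider the balanced regret multi-representative selection problem \[\min_{\pmb x\in\mathcal X}\ \max_{\pmb\delta\in\Delta(\Gamma),\,\pmb y\in\mathcal X}\ \min_{\pmb\epsilon\in\Delta(\Gamma')}\ \sum_{i\in[n]}(\hat c_i+d_i\delta_i+d_i\epsilon_i)(x_i-y_i),\quad \mathcal X=\Big\{\pmb x\in\{0,1\}^n:\sum_{i\in T_\ell}x_i=p_\ell\ \forall\ell\in[L]\Big\}.\] If $\hat{\pmb c}$ or $\pmb d$ is a vector all of whose entries are equal, then an optimal solution can be found in polynomial time.
   Context: $[n]=\{1,\dots,n\}$; $T_1\cup\dots\cup T_L=[n]$ is a partition and $p_\ell\le|T_\ell|$ are integers; $\hat c_i\ge0$, $d_i\ge0$; $\Gamma,\Gamma'\ge0$ are integers and $\Delta(k)=\{\pmb\delta\in\{0,1\}^n:\sum_i\delta_i\le k\}$. *)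

theory Defs
  imports Complex_Main
begin

text \<open>Indices are 0-based: items are 0..n-1, parts are 0..L-1.
  The partition T_1,...,T_L of the item set is given by a label function t:
  item i belongs to part t i.\<close>

definition part :: "nat \<Rightarrow> (nat \<Rightarrow> nat) \<Rightarrow> nat \<Rightarrow> nat set" where
  "part n t l = {i. i < n \<and> t i = l}"

definition feasible :: "nat \<Rightarrow> nat \<Rightarrow> (nat \<Rightarrow> nat) \<Rightarrow> (nat \<Rightarrow> nat) \<Rightarrow> (nat \<Rightarrow> nat) set" where
  "feasible n L t p = {x. (\<forall>i. x i \<in> {0,1}) \<and> (\<forall>i\<ge>n. x i = 0) \<and>
       (\<forall>l<L. (\<Sum>i\<in>part n t l. x i) = p l)}"

definition Delta :: "nat \<Rightarrow> nat \<Rightarrow> (nat \<Rightarrow> nat) set" where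
  "Delta n k = {\<delta>. (\<forall>i. \<delta> i \<in> {0,1}) \<and> (\<forall>i\<ge>n. \<delta> i = 0) \<and> (\<Sum>i<n. \<delta> i) \<le> k}"

definition regret_val ::
  "nat \<Rightarrow> (nat \<Rightarrow> real) \<Rightarrow> (nat \<Rightarrow> real) \<Rightarrow> (nat \<Rightarrow> nat) \<Rightarrow> (nat \<Rightarrow> nat) \<Rightarrow> (nat \<Rightarrow> nat) \<Rightarrow> (nat \<Rightarrow> nat) \<Rightarrow> real" where
  "regret_val n c d \<delta> \<epsilon> x y =
     (\<Sum>i<n. (c i + d i * real (\<delta> i) + d i * real (\<epsilon> i)) * (real (x i) - real (y i)))"

definition objective ::
  "nat \<Rightarrow> nat \<Rightarrow> (nat \<Rightarrow> nat) \<Rightarrow> (nat \<Rightarrow> nat) \<Rightarrow> nat \<Rightarrow> nat \<Rightarrow> (nat \<Rightarrow> real) \<Rightarrow> (nat \<Rightarrow> real) \<Rightarrow> (nat \<Rightarrow> nat) \<Rightarrow> real" where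
  "objective n L t p G G' c d x =
     Max ((\<lambda>(\<delta>, y). Min ((\<lambda>\<epsilon>. regret_val n c d \<delta> \<epsilon> x y) ` Delta n G'))
            ` (Delta n G \<times> feasible n L t p))"

definition optimal ::
  "nat \<Rightarrow> nat \<Rightarrow> (nat \<Rightarrow> nat) \<Rightarrow> (nat \<Rightarrow> nat) \<Rightarrow> nat \<Rightarrow> nat \<Rightarrow> (nat \<Rightarrow> real) \<Rightarrow> (nat \<Rightarrow> real) \<Rightarrow> (nat \<Rightarrow> nat) \<Rightarrow> bool" where
  "optimal n L t p G G' c d x \<longleftrightarrow> x \<in> feasible n L t p \<and>
     (\<forall>x'\<in>feasible n L t p. objective n L t p G G' c d x \<le> objective n L t p G G' c d x')"

definition valid_instance ::
  "nat \<Rightarrow> nat \<Rightarrow> (nat \<Rightarrow> nat) \<Rightarrow> (nat \<Rightarrow> nat) \<Rightarrow> (nat \<Rightarrow> real) \<Rightarrow> (nat \<Rightarrow> real) \<Rightarrow> bool" where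
  "valid_instance n L t p c d \<longleftrightarrow>
     (\<forall>i<n. t i < L) \<and> (\<forall>l<L. part n t l \<noteq> {}) \<and>
     (\<forall>l<L. p l \<le> card (part n t l)) \<and>
     (\<forall>i<n. c i \<ge> 0 \<and> d i \<ge> 0)"

definition all_equal :: "nat \<Rightarrow> (nat \<Rightarrow> real) \<Rightarrow> bool" where
  "all_equal n v \<longleftrightarrow> (\<forall>i<n. \<forall>j<n. v i = v j)"

text \<open>No multiplication, division or floor, so that unit cost is a sound measure
  (polynomially related to Turing machines on integer data).\<close>

datatype instr =
    Const nat int
  | Add nat nat nat
  | Sub nat nat nat
  | Load nat nat
  | Store nat nat
  | JmpLe nat nat nat
  | Halt

type_synonym config = "nat \<times> (nat \<Rightarrow> real)"

definition halted :: "instr list \<Rightarrow> config \<Rightarrow> bool" where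
  "halted P cf \<longleftrightarrow> fst cf \<ge> length P \<or> P ! fst cf = Halt"

fun exec :: "instr \<Rightarrow> config \<Rightarrow> config option" where
  "exec (Const r v) (pc, m) = Some (Suc pc, m(r := real_of_int v))"
| "exec (Add r a b) (pc, m) = Some (Suc pc, m(r := m a + m b))"
| "exec (Sub r a b) (pc, m) = Some (Suc pc, m(r := m a - m b))"
| "exec (Load r a) (pc, m) =
     (if m a \<in> \<nat> then Some (Suc pc, m(r := m (nat \<lfloor>m a\<rfloor>))) else None)"
| "exec (Store a s) (pc, m) =
     (if m a \<in> \<nat> then Some (Suc pc, m(nat \<lfloor>m a\<rfloor> := m s)) else None)"
| "exec (JmpLe a b tg) (pc, m) = Some (if m a \<le> m b then tg else Suc pc, m)"
| "exec Halt (pc, m) = Some (pc, m)"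

fun run :: "instr list \<Rightarrow> nat \<Rightarrow> config \<Rightarrow> config option" where
  "run P 0 cf = Some cf"
| "run P (Suc k) cf =
     (if halted P cf then Some cf
      else (case exec (P ! fst cf) cf of None \<Rightarrow> None | Some cf' \<Rightarrow> run P k cf'))"

text \<open>Input encoding: reg 0 = n, 1 = L, 2 = Gamma, 3 = Gamma',
  4+i = c_i, 4+n+i = d_i, 4+2n+i = t_i (i<n), 4+3n+l = p_l (l<L), all others 0.
  Output convention: on halting, register 4+i holds x_i (i<n).\<close>
definition encode ::
  "nat \<Rightarrow> nat \<Rightarrow> (nat \<Rightarrow> nat) \<Rightarrow> (nat \<Rightarrow> nat) \<Rightarrow> nat \<Rightarrow> nat \<Rightarrow> (nat \<Rightarrow> real) \<Rightarrow> (nat \<Rightarrow> real) \<Rightarrow> nat \<Rightarrow> real" where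
  "encode n L t p G G' c d r =
     (if r = 0 then real n else if r = 1 then real L
      else if r = 2 then real G else if r = 3 then real G'
      else if 4 \<le> r \<and> r < 4 + n then c (r - 4)
      else if 4 + n \<le> r \<and> r < 4 + 2*n then d (r - (4 + n))
      else if 4 + 2*n \<le> r \<and> r < 4 + 3*n then real (t (r - (4 + 2*n)))
      else if 4 + 3*n \<le> r \<and> r < 4 + 3*n + L then real (p (r - (4 + 3*n)))
      else 0)"

end

theory Submission
  imports "HOL-Combinatorics.Permutations" "HOL-Library.Product_Lexorder" Defs
begin

(* Within each part, the greedy solution takes the p_l items of smallest c_i + d_i.  The objective
   is invariant under relabelling the items of a part, so exchanging a chosen item i with an
   unchosen item j of the same part amounts to keeping x and swapping the coefficients of i and j.
   If c or d is constant, c_j + d_j <= c_i + d_i gives c_j <= c_i and d_j <= d_i, so the swap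
   lowers the coefficients of a chosen item and raises those of an unchosen one; this can only
   decrease every regret term, hence the objective.  Repeated exchanges turn any feasible x into
   the greedy solution, which is therefore optimal.  It is computed in O(n^2) steps by ranking
   every item within its part. *)

(* Defs is imported last so that part denotes the partition and not Multiset.part. *)

section \<open>Ranks with respect to an injective key\<close>

definition rank_in :: "'a set \<Rightarrow> ('a \<Rightarrow> 'b::linorder) \<Rightarrow> 'a \<Rightarrow> nat" where
  "rank_in A f a = card {b \<in> A. f b < f a}"

lemma rank_in_less_rank_in:
  assumes "finite A" "b \<in> A" "f b < f a"
  shows "rank_in A f b < rank_in A f a"
proof -
  have "{b' \<in> A. f b' < f b} \<subset> {b' \<in> A. f b' < f a}"
    using assms(2,3) by auto
  then show ?thesis
    unfolding rank_in_def using assms(1) by (intro psubset_card_mono) auto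
qed

lemma rank_in_less_card:
  assumes "finite A" "a \<in> A"
  shows "rank_in A f a < card A"
  unfolding rank_in_def using assms by (intro psubset_card_mono) auto

lemma bij_betw_rank_in:
  assumes "finite A" "inj_on f A"
  shows "bij_betw (rank_in A f) A {..<card A}"
proof -
  have inj: "inj_on (rank_in A f) A"
  proof (rule inj_onI)
    fix a b assume ab: "a \<in> A" "b \<in> A" "rank_in A f a = rank_in A f b"
    show "a = b"
    proof (rule ccontr)
      assume "a \<noteq> b"
      then have "f a \<noteq> f b" using ab(1,2) assms(2) by (auto dest: inj_onD)
      then consider "f a < f b" | "f b < f a" by (meson linorder_neqE)
      then show False
      proof cases
        case 1
        with ab show False using rank_in_less_rank_in[OF assms(1) ab(1), of f b] by simp
      next
        case 2
        with ab show False using rank_in_less_rank_in[OF assms(1) ab(2), of f a] by simp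
      qed
    qed
  qed
  have "rank_in A f ` A = {..<card A}"
    using rank_in_less_card[OF assms(1)] card_image[OF inj]
    by (intro card_subset_eq) auto
  with inj show ?thesis
    unfolding bij_betw_def by blast
qed

lemma card_rank_in_less:
  assumes "finite A" "inj_on f A" "q \<le> card A"
  shows "card {a \<in> A. rank_in A f a < q} = q"
proof -
  have bij: "bij_betw (rank_in A f) A {..<card A}"
    by (rule bij_betw_rank_in[OF assms(1,2)])
  have "rank_in A f ` {a \<in> A. rank_in A f a < q} = {..<q}"
  proof (intro equalityI subsetI)
    fix k assume "k \<in> {..<q}"
    then obtain a where "a \<in> A" "k = rank_in A f a"
      using bij assms(3) unfolding bij_betw_def by (metis imageE lessThan_iff order_less_le_trans)
    with \<open>k \<in> {..<q}\<close> show "k \<in> rank_in A f ` {a \<in> A. rank_in A f a < q}" by auto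
  qed auto
  moreover have "inj_on (rank_in A f) {a \<in> A. rank_in A f a < q}"
    by (rule inj_on_subset[OF bij_betw_imp_inj_on[OF bij]]) auto
  ultimately show ?thesis
    by (metis card_image card_lessThan)
qed

lemma finite_part [simp]: "finite (part n t l)"
  unfolding part_def by simp

lemma part_eq_filter: "part n t l = {i \<in> {..<n}. t i = l}"
  unfolding part_def by auto

definition greedy :: "nat \<Rightarrow> (nat \<Rightarrow> nat) \<Rightarrow> (nat \<Rightarrow> nat) \<Rightarrow> (nat \<Rightarrow> real) \<Rightarrow> nat \<Rightarrow> nat" where
  "greedy n t p w i =
     (if i < n \<and> rank_in (part n t (t i)) (\<lambda>j. (w j, j)) i < p (t i) then 1 else 0)"

lemma greedy_feasible:
  assumes "\<And>l. l < L \<Longrightarrow> p l \<le> card (part n t l)"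
  shows "greedy n t p w \<in> feasible n L t p"
proof -
  have "(\<Sum>i\<in>part n t l. greedy n t p w i) = p l" if "l < L" for l
  proof -
    have "(\<Sum>i\<in>part n t l. greedy n t p w i)
        = (\<Sum>i\<in>part n t l. if rank_in (part n t l) (\<lambda>j. (w j, j)) i < p l then 1 else 0)"
    proof (rule sum.cong[OF refl])
      fix i assume "i \<in> part n t l"
      then have "i < n" "t i = l" by (simp_all add: part_def)
      then show "greedy n t p w i = (if rank_in (part n t l) (\<lambda>j. (w j, j)) i < p l then 1 else 0)"
        by (simp add: greedy_def)
    qed
    also have "\<dots> = card {i \<in> part n t l. rank_in (part n t l) (\<lambda>j. (w j, j)) i < p l}"
      by (simp add: sum.inter_filter[OF finite_part, symmetric])
    also have "\<dots> = p l"
      using assms[OF that] by (intro card_rank_in_less) (simp_all add: inj_on_def)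
    finally show ?thesis .
  qed
  moreover have "greedy n t p w i \<in> {0, 1}" "n \<le> i \<Longrightarrow> greedy n t p w i = 0" for i
    by (simp_all add: greedy_def)
  ultimately show ?thesis
    unfolding feasible_def by blast
qed

lemma greedy_prefers_lighter:
  assumes "greedy n t p w i = 1" "greedy n t p w j = 0" "j < n" "t j = t i"
  shows "w i \<le> w j"
proof (rule ccontr)
  let ?rank = "rank_in (part n t (t i)) (\<lambda>j. (w j, j))"
  assume "\<not> w i \<le> w j"
  then have "(w j, j) < (w i, i)"
    by simp
  moreover have "j \<in> part n t (t i)"
    using assms(3,4) by (simp add: part_def)
  ultimately have "?rank j < ?rank i"
    by (intro rank_in_less_rank_in) simp_all
  moreover have "?rank i < p (t i)"
    using assms(1) by (simp add: greedy_def split: if_splits)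
  moreover have "\<not> ?rank j < p (t i)"
    using assms(2-4) by (simp add: greedy_def split: if_splits)
  ultimately show False
    by linarith
qed

section \<open>Relabelling items and changing coefficients\<close>

lemma feasible_values:
  assumes "x \<in> feasible n L t p"
  shows "x k = 0 \<or> x k = 1" "n \<le> k \<Longrightarrow> x k = 0" "l < L \<Longrightarrow> (\<Sum>i\<in>part n t l. x i) = p l"
  using assms by (auto simp: feasible_def)

lemma finite_binary_vectors: "finite {f :: nat \<Rightarrow> nat. (\<forall>i. f i \<in> {0, 1}) \<and> (\<forall>i\<ge>n. f i = 0)}"
  by (rule finite_subset[OF _ finite_set_of_finite_funs[of "{..<n}" "{0, 1}" 0]]) auto

lemma finite_Delta: "finite (Delta n k)"
  by (rule finite_subset[OF _ finite_binary_vectors]) (auto simp: Delta_def)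

lemma finite_feasible: "finite (feasible n L t p)"
  by (rule finite_subset[OF _ finite_binary_vectors]) (auto simp: feasible_def)

lemma Min_image_mono:
  fixes f g :: "'a \<Rightarrow> 'b::linorder"
  assumes "finite A" "\<And>a. a \<in> A \<Longrightarrow> f a \<le> g a"
  shows "Min (f ` A) \<le> Min (g ` A)"
  using assms by (cases "A = {}") (auto intro!: Min.boundedI intro: order_trans[OF Min_le])

lemma Max_image_mono:
  fixes f g :: "'a \<Rightarrow> 'b::linorder"
  assumes "finite A" "\<And>a. a \<in> A \<Longrightarrow> f a \<le> g a"
  shows "Max (f ` A) \<le> Max (g ` A)"
  using assms by (cases "A = {}") (auto intro!: Max.boundedI intro: order_trans[OF _ Max_ge])

lemma Delta_comp_permutes:
  assumes s: "s permutes {..<n}" and \<delta>: "\<delta> \<in> Delta n k"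
  shows "\<delta> \<circ> s \<in> Delta n k"
proof -
  have "(\<Sum>i<n. \<delta> (s i)) = (\<Sum>i<n. \<delta> i)"
    using sum.permute[OF s, of \<delta>] by simp
  moreover have "s i = i" if "n \<le> i" for i
    using permutes_not_in[OF s] that by simp
  ultimately show ?thesis
    using \<delta> unfolding Delta_def by auto
qed

lemma sum_part_comp_permutes:
  assumes s: "s permutes {..<n}" and t: "t \<circ> s = t"
  shows "(\<Sum>i\<in>part n t l. x (s i)) = (\<Sum>i\<in>part n t l. x i)"
proof -
  let ?g = "\<lambda>i. if t i = l then x i else 0"
  have "(\<Sum>i\<in>part n t l. x (s i)) = (\<Sum>i<n. if t i = l then x (s i) else 0)"
    unfolding part_eq_filter by (rule sum.inter_filter) simp
  also have "\<dots> = (\<Sum>i<n. ?g (s i))"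
    using t by (simp add: fun_eq_iff)
  also have "\<dots> = (\<Sum>i<n. ?g i)"
    using sum.permute[OF s, of ?g] by simp
  also have "\<dots> = (\<Sum>i\<in>part n t l. x i)"
    unfolding part_eq_filter by (rule sum.inter_filter[symmetric]) simp
  finally show ?thesis .
qed

lemma feasible_comp_permutes:
  assumes s: "s permutes {..<n}" and t: "t \<circ> s = t" and x: "x \<in> feasible n L t p"
  shows "x \<circ> s \<in> feasible n L t p"
proof -
  have "s i = i" if "n \<le> i" for i
    using permutes_not_in[OF s] that by simp
  then show ?thesis
    using x sum_part_comp_permutes[OF s t, where x = x] unfolding feasible_def by auto
qed

lemma regret_val_comp_permutes:
  assumes "s permutes {..<n}"
  shows "regret_val n (c \<circ> s) (d \<circ> s) (\<delta> \<circ> s) (\<epsilon> \<circ> s) (x \<circ> s) (y \<circ> s) = regret_val n c d \<delta> \<epsilon> x y"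
  unfolding regret_val_def
  using sum.permute[OF assms, of "\<lambda>i. (c i + d i * real (\<delta> i) + d i * real (\<epsilon> i)) * (real (x i) - real (y i))"]
  by simp

lemma image_comp_bij_eq:
  assumes "bij s" "\<And>f. f \<in> A \<Longrightarrow> f \<circ> s \<in> A" "\<And>f. f \<in> A \<Longrightarrow> f \<circ> inv s \<in> A"
  shows "(\<lambda>f. f \<circ> s) ` A = A"
proof (intro equalityI subsetI)
  fix f assume "f \<in> A"
  moreover have "f = (f \<circ> inv s) \<circ> s"
    using assms(1) by (simp add: comp_assoc bij_is_inj)
  ultimately show "f \<in> (\<lambda>f. f \<circ> s) ` A"
    using assms(3) by blast
qed (use assms(2) in blast)

lemma objective_comp_permutes:
  assumes s: "s permutes {..<n}" and t: "t \<circ> s = t"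
  shows "objective n L t p G G' (c \<circ> s) (d \<circ> s) (x \<circ> s) = objective n L t p G G' c d x"
proof -
  let ?X = "feasible n L t p" and ?R = "regret_val n"
  have s': "inv s permutes {..<n}" "t \<circ> inv s = t"
    using permutes_inv[OF s] t permutes_inv_o(1)[OF s] by (metis comp_assoc comp_id)+
  have D: "(\<lambda>f. f \<circ> s) ` Delta n k = Delta n k" for k
    using Delta_comp_permutes s s' permutes_bij[OF s] by (intro image_comp_bij_eq)
  have X: "(\<lambda>f. f \<circ> s) ` ?X = ?X"
    using feasible_comp_permutes s t s' permutes_bij[OF s] by (intro image_comp_bij_eq)
  have inner: "Min ((\<lambda>\<epsilon>. ?R (c \<circ> s) (d \<circ> s) (\<delta> \<circ> s) \<epsilon> (x \<circ> s) (y \<circ> s)) ` Delta n G')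
             = Min ((\<lambda>\<epsilon>. ?R c d \<delta> \<epsilon> x y) ` Delta n G')" for \<delta> y
  proof -
    have "(\<lambda>\<epsilon>. ?R (c \<circ> s) (d \<circ> s) (\<delta> \<circ> s) \<epsilon> (x \<circ> s) (y \<circ> s)) ` Delta n G'
        = (\<lambda>\<epsilon>. ?R (c \<circ> s) (d \<circ> s) (\<delta> \<circ> s) \<epsilon> (x \<circ> s) (y \<circ> s)) ` (\<lambda>f. f \<circ> s) ` Delta n G'"
      by (simp only: D)
    also have "\<dots> = (\<lambda>\<epsilon>. ?R c d \<delta> \<epsilon> x y) ` Delta n G'"
      by (simp add: image_image regret_val_comp_permutes[OF s])
    finally show ?thesis by simp
  qed
  let ?F = "\<lambda>c d x (\<delta>, y). Min ((\<lambda>\<epsilon>. ?R c d \<delta> \<epsilon> x y) ` Delta n G')"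
  have "objective n L t p G G' (c \<circ> s) (d \<circ> s) (x \<circ> s)
      = Max (?F (c \<circ> s) (d \<circ> s) (x \<circ> s) ` map_prod (\<lambda>f. f \<circ> s) (\<lambda>f. f \<circ> s) ` (Delta n G \<times> ?X))"
    unfolding objective_def by (simp only: map_prod_surj_on[OF D X])
  also have "\<dots> = Max (?F c d x ` (Delta n G \<times> ?X))"
    unfolding image_image by (intro arg_cong[where f = Max] image_cong) (auto simp: inner)
  also have "\<dots> = objective n L t p G G' c d x"
    unfolding objective_def ..
  finally show ?thesis .
qed

lemma regret_val_mono_coeffs:
  assumes "\<And>k. k < n \<Longrightarrow> y k < x k \<Longrightarrow> c' k \<le> c k \<and> d' k \<le> d k"
    and "\<And>k. k < n \<Longrightarrow> x k < y k \<Longrightarrow> c k \<le> c' k \<and> d k \<le> d' k"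
  shows "regret_val n c' d' \<delta> \<epsilon> x y \<le> regret_val n c d \<delta> \<epsilon> x y"
  unfolding regret_val_def
proof (rule sum_mono)
  fix k assume k: "k \<in> {..<n}"
  let ?a = "real (\<delta> k)" and ?b = "real (\<epsilon> k)" and ?z = "real (x k) - real (y k)"
  consider "y k < x k" | "x k < y k" | "x k = y k" by linarith
  then show "(c' k + d' k * ?a + d' k * ?b) * ?z \<le> (c k + d k * ?a + d k * ?b) * ?z"
  proof cases
    case 1
    with assms(1) k have "c' k + d' k * ?a + d' k * ?b \<le> c k + d k * ?a + d k * ?b"
      by (auto intro!: add_mono mult_right_mono)
    with 1 show ?thesis by (intro mult_right_mono) auto
  next
    case 2
    with assms(2) k have "c k + d k * ?a + d k * ?b \<le> c' k + d' k * ?a + d' k * ?b"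
      by (auto intro!: add_mono mult_right_mono)
    with 2 show ?thesis by (intro mult_right_mono_neg) auto
  qed simp
qed

lemma objective_mono_coeffs:
  assumes x: "x \<in> feasible n L t p"
    and "\<And>k. k < n \<Longrightarrow> x k = 1 \<Longrightarrow> c' k \<le> c k \<and> d' k \<le> d k"
    and "\<And>k. k < n \<Longrightarrow> x k = 0 \<Longrightarrow> c k \<le> c' k \<and> d k \<le> d' k"
  shows "objective n L t p G G' c' d' x \<le> objective n L t p G G' c d x"
proof -
  let ?X = "feasible n L t p"
  have "regret_val n c' d' \<delta> \<epsilon> x y \<le> regret_val n c d \<delta> \<epsilon> x y" if "y \<in> ?X" for \<delta> \<epsilon> y
    using assms feasible_values(1)[OF x] feasible_values(1)[OF that]
    by (intro regret_val_mono_coeffs) (metis less_one not_less_zero)+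
  then have "Min ((\<lambda>\<epsilon>. regret_val n c' d' \<delta> \<epsilon> x y) ` Delta n G')
           \<le> Min ((\<lambda>\<epsilon>. regret_val n c d \<delta> \<epsilon> x y) ` Delta n G')" if "y \<in> ?X" for \<delta> y
    using that finite_Delta by (intro Min_image_mono) blast+
  then show ?thesis
    unfolding objective_def
    using finite_Delta finite_feasible by (intro Max_image_mono) auto
qed

lemma objective_transpose_le:
  assumes x: "x \<in> feasible n L t p" and ij: "i < n" "j < n" "t i = t j" "x i = 1" "x j = 0"
    and cd: "c j \<le> c i" "d j \<le> d i"
  shows "objective n L t p G G' c d (x \<circ> Transposition.transpose i j) \<le> objective n L t p G G' c d x"
proof -
  let ?s = "Transposition.transpose i j"
  have s: "?s permutes {..<n}" "t \<circ> ?s = t"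
    using ij by (auto simp: permutes_swap_id transpose_def fun_eq_iff)
  have "objective n L t p G G' c d (x \<circ> ?s) = objective n L t p G G' (c \<circ> ?s) (d \<circ> ?s) x"
    using objective_comp_permutes[OF s, where x = "x \<circ> ?s"] by (simp add: comp_assoc)
  also have "\<dots> \<le> objective n L t p G G' c d x"
    using ij cd by (intro objective_mono_coeffs[OF x]) (auto simp: transpose_def)
  finally show ?thesis .
qed

lemma feasible_exchange:
  assumes x: "x \<in> feasible n L t p" and z: "z \<in> feasible n L t p" and t: "\<forall>i<n. t i < L"
    and k: "k < n" "x k = 1" "z k = 0"
  shows "\<exists>j<n. t j = t k \<and> x j = 0 \<and> z j = 1"
proof (rule ccontr)
  assume no_partner: "\<not> ?thesis"
  let ?T = "part n t (t k)"
  have "\<forall>j\<in>?T. z j \<le> x j"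
  proof
    fix j assume "j \<in> ?T"
    with no_partner have "\<not> (x j = 0 \<and> z j = 1)"
      by (simp add: part_def)
    with feasible_values(1)[OF x, of j] feasible_values(1)[OF z, of j] show "z j \<le> x j"
      by auto
  qed
  moreover have "k \<in> ?T" "z k < x k"
    using k by (simp_all add: part_def)
  ultimately have "sum z ?T < sum x ?T"
    by (intro sum_strict_mono_ex1) auto
  moreover have "sum z ?T = sum x ?T"
    using feasible_values(3)[OF x] feasible_values(3)[OF z] t k by simp
  ultimately show False by simp
qed

lemma feasible_disagreement_pair:
  assumes x: "x \<in> feasible n L t p" and z: "z \<in> feasible n L t p" and t: "\<forall>i<n. t i < L"
    and "x \<noteq> z"
  shows "\<exists>i j. i < n \<and> j < n \<and> t i = t j \<and> x i = 1 \<and> z i = 0 \<and> x j = 0 \<and> z j = 1"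
proof -
  obtain k where k: "x k \<noteq> z k"
    using \<open>x \<noteq> z\<close> by blast
  then have "k < n"
    using feasible_values(2)[OF x] feasible_values(2)[OF z] by (metis not_less)
  show ?thesis
  proof (cases "x k = 1")
    case True
    with k feasible_values(1)[OF z, of k] have "z k = 0" by auto
    moreover obtain j where "j < n" "t j = t k" "x j = 0" "z j = 1"
      using feasible_exchange[OF x z t \<open>k < n\<close> True \<open>z k = 0\<close>] by blast
    ultimately show ?thesis
      using \<open>k < n\<close> True by (intro exI[of _ k] exI[of _ j]) auto
  next
    case False
    with feasible_values(1)[OF x, of k] have "x k = 0" by auto
    with k feasible_values(1)[OF z, of k] have "z k = 1" by auto
    moreover obtain i where "i < n" "t i = t k" "z i = 0" "x i = 1"
      using feasible_exchange[OF z x t \<open>k < n\<close> \<open>z k = 1\<close> \<open>x k = 0\<close>] by blast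
    ultimately show ?thesis
      using \<open>k < n\<close> \<open>x k = 0\<close> by (intro exI[of _ i] exI[of _ k]) auto
  qed
qed

lemma greedy_improvement_step:
  fixes n :: nat and t p :: "nat \<Rightarrow> nat" and c d :: "nat \<Rightarrow> real"
  defines "g \<equiv> greedy n t p (\<lambda>i. c i + d i)"
  assumes v: "valid_instance n L t p c d" and eq: "all_equal n c \<or> all_equal n d"
    and x: "x \<in> feasible n L t p" and "x \<noteq> g"
  shows "\<exists>x'\<in>feasible n L t p. objective n L t p G G' c d x' \<le> objective n L t p G G' c d x \<and>
           card {k. k < n \<and> x' k \<noteq> g k} < card {k. k < n \<and> x k \<noteq> g k}"
proof -
  have g: "g \<in> feasible n L t p"
    using v unfolding g_def valid_instance_def by (intro greedy_feasible) blast
  have t: "\<forall>i<n. t i < L"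
    using v by (simp add: valid_instance_def)
  obtain i j where ij: "i < n" "j < n" "t i = t j" "x i = 1" "g i = 0" "x j = 0" "g j = 1"
    using feasible_disagreement_pair[OF x g t \<open>x \<noteq> g\<close>] by blast
  have "c j + d j \<le> c i + d i"
    using greedy_prefers_lighter[of n t p _ j i] ij unfolding g_def by simp
  moreover have "c j = c i \<or> d j = d i"  \<comment> \<open>the only use of the hypothesis on c and d\<close>
    using eq ij(1,2) unfolding all_equal_def by blast
  ultimately have cd: "c j \<le> c i" "d j \<le> d i"
    by auto
  let ?s = "Transposition.transpose i j"
  have s: "?s permutes {..<n}" "t \<circ> ?s = t"
    using ij by (auto simp: permutes_swap_id transpose_def fun_eq_iff)
  have "x \<circ> ?s \<in> feasible n L t p"
    by (rule feasible_comp_permutes[OF s x])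
  moreover have "objective n L t p G G' c d (x \<circ> ?s) \<le> objective n L t p G G' c d x"
    by (rule objective_transpose_le[OF x ij(1-4,6) cd])
  moreover have "{k. k < n \<and> (x \<circ> ?s) k \<noteq> g k} \<subseteq> {k. k < n \<and> x k \<noteq> g k} - {i}"
  proof
    fix k assume "k \<in> {k. k < n \<and> (x \<circ> ?s) k \<noteq> g k}"
    moreover have "k \<noteq> i" "k \<noteq> j" if "(x \<circ> ?s) k \<noteq> g k"
      using that ij by auto
    ultimately show "k \<in> {k. k < n \<and> x k \<noteq> g k} - {i}"
      by simp
  qed
  then have "card {k. k < n \<and> (x \<circ> ?s) k \<noteq> g k} < card {k. k < n \<and> x k \<noteq> g k}"
    using ij by (intro le_less_trans[OF card_mono card_Diff1_less]) auto
  ultimately show ?thesis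
    by blast
qed

lemma greedy_optimal:
  assumes v: "valid_instance n L t p c d" and eq: "all_equal n c \<or> all_equal n d"
  shows "optimal n L t p G G' c d (greedy n t p (\<lambda>i. c i + d i))"
proof -
  let ?g = "greedy n t p (\<lambda>i. c i + d i)"
  have "objective n L t p G G' c d ?g \<le> objective n L t p G G' c d x"
    if "x \<in> feasible n L t p" for x
    using that
  proof (induction "card {k. k < n \<and> x k \<noteq> ?g k}" arbitrary: x rule: less_induct)
    case less
    show ?case
    proof (cases "x = ?g")
      case False
      then obtain x' where "x' \<in> feasible n L t p"
        "objective n L t p G G' c d x' \<le> objective n L t p G G' c d x"
        "card {k. k < n \<and> x' k \<noteq> ?g k} < card {k. k < n \<and> x k \<noteq> ?g k}"
        using greedy_improvement_step[OF v eq less.prems] by blast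
      with less.hyps show ?thesis
        by (meson order_trans)
    qed simp
  qed
  moreover have "?g \<in> feasible n L t p"
    using v unfolding valid_instance_def by (intro greedy_feasible) blast
  ultimately show ?thesis
    unfolding optimal_def by blast
qed

section \<open>Bounded runs of the real RAM\<close>

definition reach :: "instr list \<Rightarrow> config \<Rightarrow> nat \<Rightarrow> config \<Rightarrow> bool" where
  "reach P cf s cf' \<longleftrightarrow> (\<forall>k. run P (s + k) cf = run P k cf')"

lemma reach_refl: "reach P cf 0 cf"
  by (simp add: reach_def)

lemma reach_trans: "reach P cf a cf' \<Longrightarrow> reach P cf' b cf'' \<Longrightarrow> reach P cf (a + b) cf''"
  unfolding reach_def by (metis add.assoc)

lemma reach_Suc:
  assumes "\<not> halted P (pc, m)" "exec (P ! pc) (pc, m) \<noteq> None"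
  shows "reach P (pc, m) (Suc s) cf' \<longleftrightarrow> reach P (the (exec (P ! pc) (pc, m))) s cf'"
  using assms unfolding reach_def by auto

(* Unfolding numeral step counts directly, rather than rewriting them to Suc form, makes simp stop
   at a step it cannot evaluate instead of looping. *)
lemma reach_numeral:
  assumes "\<not> halted P (pc, m)" "exec (P ! pc) (pc, m) \<noteq> None"
  shows "reach P (pc, m) (numeral k) cf' \<longleftrightarrow> reach P (the (exec (P ! pc) (pc, m))) (pred_numeral k) cf'"
  using reach_Suc[OF assms] by (simp add: numeral_eq_Suc)

definition reach_within :: "instr list \<Rightarrow> config \<Rightarrow> nat \<Rightarrow> config \<Rightarrow> bool" where
  "reach_within P cf N cf' \<longleftrightarrow> (\<exists>s\<le>N. reach P cf s cf')"

lemma reach_imp_reach_within: "reach P cf s cf' \<Longrightarrow> s \<le> N \<Longrightarrow> reach_within P cf N cf'"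
  unfolding reach_within_def by blast

lemma ex_reach_imp_ex_reach_within:
  "\<exists>m'. reach P cf s (pc, m') \<and> Q m' \<Longrightarrow> s \<le> N \<Longrightarrow> \<exists>m'. reach_within P cf N (pc, m') \<and> Q m'"
  using reach_imp_reach_within by blast

lemma reach_within_trans:
  "reach_within P cf a cf' \<Longrightarrow> reach_within P cf' b cf'' \<Longrightarrow> reach_within P cf (a + b) cf''"
  unfolding reach_within_def by (meson add_mono reach_trans)

lemma reach_within_mono: "reach_within P cf a cf' \<Longrightarrow> a \<le> b \<Longrightarrow> reach_within P cf b cf'"
  unfolding reach_within_def by (meson order_trans)

lemma run_halted: "halted P cf \<Longrightarrow> run P k cf = Some cf"
  by (induction k) auto

lemma run_reach_within:
  assumes "reach_within P cf N cf'" "halted P cf'"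
  shows "run P N cf = Some cf'"
proof -
  obtain s where "s \<le> N" "reach P cf s cf'"
    using assms(1) unfolding reach_within_def by blast
  then have "run P (s + (N - s)) cf = run P (N - s) cf'"
    unfolding reach_def by blast
  with \<open>s \<le> N\<close> show ?thesis
    using run_halted[OF assms(2)] by simp
qed

lemma reach_within_loop:
  assumes step: "\<And>k m. k < K \<Longrightarrow> I k m \<Longrightarrow> \<exists>m'. reach_within P (pc, m) b (pc, m') \<and> I (Suc k) m'"
    and start: "I 0 m"
  shows "\<exists>m'. reach_within P (pc, m) (K * b) (pc, m') \<and> I K m'"
proof -
  have "\<exists>m'. reach_within P (pc, m) (k * b) (pc, m') \<and> I k m'" if "k \<le> K" for k
    using that
  proof (induction k)
    case 0
    show ?case
      using start reach_imp_reach_within[OF reach_refl] by blast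
  next
    case (Suc k)
    then obtain m1 where m1: "reach_within P (pc, m) (k * b) (pc, m1)" "I k m1"
      by auto
    moreover obtain m2 where "reach_within P (pc, m1) b (pc, m2)" "I (Suc k) m2"
      using step[OF _ m1(2)] Suc.prems by auto
    ultimately show ?case
      using reach_within_trans by (metis add.commute mult_Suc)
  qed
  then show ?thesis
    by blast
qed

(* These rules keep register contents in the form real k, so that the addresses of Load and Store
   are recognised as natural numbers. *)
lemma real_add_numeral: "real a + numeral k = real (a + numeral k)"
  by simp

lemma real_add_one: "real a + 1 = real (Suc a)"
  by simp

lemma real_Suc_minus_one: "real (Suc a) - 1 = real a"
  by simp

lemmas ram_simps = reach_Suc reach_numeral halted_def exec.simps
  real_add_numeral real_add_one of_nat_add[symmetric] real_Suc_minus_one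

section \<open>A quadratic-time program for the greedy selection\<close>

(* Registers 0-15 are scratch; E = L + 3n + 4 is one past the input, B = E + 16 and R = 2E + 12.
   pc 0-12 computes E and B and saves registers 4 and 5 at B and B + 1, and pc 13-18 copies
   registers 6, ..., E - 1 to B + 2, ..., so that c, d, t, p start at B, B + n, B + 2n, B + 3n.
   After the set-up at pc 19-29, the loop at pc 30-65 handles item i: the inner loop at pc 39-56
   counts in register 10 the items j of the part of i with (c_j + d_j, j) < (c_i + d_i, i), and
   x_i is stored at R + i.  Finally pc 66-79 moves x_(n-1), ..., x_0 to registers 4 + n - 1, ..., 4,
   downwards because register 4 holds the loop bound.  JmpLe 3 3 is an unconditional jump. *)
definition prog :: "instr list" where
  "prog =
    [Add 2 0 0, Add 2 2 0, Add 1 1 2, Const 2 4, Add 1 1 2, Const 2 16, Add 2 1 2, Const 3 1,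
     Store 2 4, Add 2 2 3, Store 2 5, Add 2 2 3, Const 4 6,
     JmpLe 1 4 19, Load 5 4, Store 2 5, Add 4 4 3, Add 2 2 3, JmpLe 3 3 13,
     Const 2 16, Add 15 1 2, Sub 2 2 2, Add 13 1 1, Const 11 12, Add 13 13 11, Add 5 15 0,
     Add 6 0 0, Add 14 15 6, Add 14 14 0, Add 4 15 2,
     JmpLe 5 4 66, Load 7 4, Add 11 4 0, Load 11 11, Add 7 7 11, Add 8 4 6, Load 8 8,
     Sub 10 10 10, Add 9 15 2,
     JmpLe 5 9 57, Add 11 9 6, Load 11 11, JmpLe 11 8 44, JmpLe 3 3 55, JmpLe 8 11 46,
     JmpLe 3 3 55, Load 11 9, Add 12 9 0, Load 12 12, Add 11 11 12, JmpLe 4 9 53, JmpLe 11 7 54,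
     JmpLe 3 3 55, JmpLe 7 11 55, Add 10 10 3, Add 9 9 3, JmpLe 3 3 39,
     Add 11 8 14, Load 11 11, JmpLe 11 10 62, Store 13 3, JmpLe 3 3 63, Store 13 2, Add 4 4 3,
     Add 13 13 3, JmpLe 3 3 30,
     JmpLe 0 2 80, Const 1 3, Add 1 0 1, Sub 0 13 3, Const 4 4,
     JmpLe 1 4 77, Load 2 0, Store 1 2, Sub 0 0 3, Sub 1 1 3, JmpLe 3 3 71,
     Load 2 0, Sub 3 3 3, Add 4 2 3,
     Halt]"

lemma length_prog [simp]: "length prog = 81"
  by (simp add: prog_def)

lemmas prog_nth [simp] = arg_cong[where f = "\<lambda>P. P ! k" for k, OF prog_def]

locale selection_instance =
  fixes n L :: nat and t p :: "nat \<Rightarrow> nat" and G G' :: nat and c d :: "nat \<Rightarrow> real"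
  assumes valid: "valid_instance n L t p c d"
begin

definition E :: nat where "E = L + (n + n + n) + 4"
definition B :: nat where "B = E + 16"
definition R :: nat where "R = E + E + 12"

lemma B_ge_16: "16 \<le> B"
  by (simp add: B_def)

lemma R_ge_16: "16 \<le> R"
  by (simp add: R_def E_def)

lemma n_plus_4_less_R: "n + 4 < R"
  by (simp add: R_def E_def)

lemma address_bounds:
  "b < n \<Longrightarrow> B + b < R" "b < n \<Longrightarrow> B + b + n < R" "b < n \<Longrightarrow> B + b + (n + n) < R"
  "l < L \<Longrightarrow> l + (B + (n + n) + n) < R"
  by (simp_all add: B_def R_def E_def)

(* Addresses in the shapes produced by symbolic execution, needed to evaluate reads from updated
   memories. *)
lemma scratch_neq:
  "r < 16 \<Longrightarrow> (B = r) = False"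
  "r < 16 \<Longrightarrow> (B + x = r) = False"
  "r < 16 \<Longrightarrow> (B + x + y = r) = False"
  "r < 16 \<Longrightarrow> (x + (B + y + z) = r) = False"
  "r < 16 \<Longrightarrow> (R = r) = False"
  "r < 16 \<Longrightarrow> (R + x = r) = False"
  "r < 16 \<Longrightarrow> (r = B) = False"
  "r < 16 \<Longrightarrow> (r = B + x) = False"
  "r < 16 \<Longrightarrow> (r = B + x + y) = False"
  "r < 16 \<Longrightarrow> (r = x + (B + y + z)) = False"
  "r < 16 \<Longrightarrow> (r = R) = False"
  "r < 16 \<Longrightarrow> (r = R + x) = False"
  "r < 16 \<Longrightarrow> (r = Suc B) = False"
  "r < 16 \<Longrightarrow> (Suc B = r) = False"
  using B_ge_16 R_ge_16 by auto

definition init_mem :: "nat \<Rightarrow> real" where "init_mem = encode n L t p G G' c d"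

definition copy_inv :: "nat \<Rightarrow> (nat \<Rightarrow> real) \<Rightarrow> bool" where
  "copy_inv k m \<longleftrightarrow> m 0 = real n \<and> m 1 = real E \<and> m 2 = real (B + k) \<and> m 3 = 1 \<and>
     m 4 = real (4 + k) \<and> 2 \<le> k \<and> (\<forall>b<k. m (B + b) = init_mem (4 + b)) \<and>
     (\<forall>a. 6 \<le> a \<longrightarrow> a < B \<longrightarrow> m a = init_mem a)"

lemma copy_start: "\<exists>m. reach prog (0, init_mem) 13 (13, m) \<and> copy_inv 2 m"
proof -
  have regs: "init_mem 0 = real n" "init_mem (Suc 0) = real L"
    by (simp_all add: init_mem_def encode_def)
  have E: "L + (n + n + n) + 4 = E" and B: "E + 16 = B"
    by (simp_all add: E_def B_def)
  show ?thesis
    apply (rule exI, rule conjI)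
     apply (simp add: ram_simps scratch_neq regs E B numeral_2_eq_2[symmetric] del: of_nat_add of_nat_Suc)
     apply (rule reach_refl)
    unfolding copy_inv_def
    using B_ge_16 by (auto simp: scratch_neq regs less_Suc_eq numeral_2_eq_2)
qed

lemma copy_step:
  assumes P: "copy_inv k m" and k: "4 + k < E"
  shows "\<exists>m'. reach prog (13, m) 6 (13, m') \<and> copy_inv (Suc k) m'"
proof -
  have rg: "m 0 = real n" "m (Suc 0) = real E" "m 2 = real (B + k)" "m 3 = 1" "m 4 = real (4 + k)"
    "2 \<le> k"
    using P unfolding copy_inv_def by auto
  have src: "m (4 + k) = init_mem (4 + k)"
    using P k unfolding copy_inv_def B_def by auto
  have nk: "\<not> E \<le> 4 + k"
    using k by simp
  show ?thesis
    apply (rule exI, rule conjI)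
     apply (simp add: ram_simps scratch_neq rg src nk del: of_nat_add of_nat_Suc)
     apply (rule reach_refl)
    unfolding copy_inv_def
    using P rg unfolding copy_inv_def by (auto simp: scratch_neq src less_Suc_eq)
qed

lemma copy_phase: "\<exists>m k. reach_within prog (0, init_mem) (6 * E + 13) (13, m) \<and> copy_inv k m \<and> E \<le> 4 + k"
proof -
  obtain m1 where r1: "reach prog (0, init_mem) 13 (13, m1)" and m1: "copy_inv 2 m1"
    using copy_start by blast
  have "\<exists>m'. reach_within prog (13, m1) ((E - 6) * 6) (13, m') \<and> copy_inv (E - 6 + 2) m'"
  proof (rule reach_within_loop[where I = "\<lambda>k. copy_inv (k + 2)"])
    fix k m assume "k < E - 6" "copy_inv (k + 2) m"
    then obtain m' where "reach prog (13, m) 6 (13, m')" "copy_inv (Suc k + 2) m'"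
      using copy_step by fastforce
    then show "\<exists>m'. reach_within prog (13, m) 6 (13, m') \<and> copy_inv (Suc k + 2) m'"
      using reach_imp_reach_within by blast
  qed (simp add: m1 numeral_2_eq_2[symmetric])
  then obtain m2 where "reach_within prog (13, m1) ((E - 6) * 6) (13, m2)" "copy_inv (E - 6 + 2) m2"
    by blast
  moreover have "reach_within prog (0, init_mem) (13 + (E - 6) * 6) (13, m2)"
    using reach_within_trans[OF reach_imp_reach_within[OF r1 order_refl]] calculation(1) by blast
  ultimately show ?thesis
    by (intro exI[of _ m2] exI[of _ "E - 6 + 2"]) (auto elim: reach_within_mono)
qed

definition input_copied :: "(nat \<Rightarrow> real) \<Rightarrow> bool" where
  "input_copied m \<longleftrightarrow> (\<forall>b<n. m (B + b) = c b) \<and> (\<forall>b<n. m (B + b + n) = d b) \<and>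
     (\<forall>b<n. m (B + b + (n + n)) = real (t b)) \<and> (\<forall>l<L. m (l + (B + (n + n) + n)) = real (p l))"

definition outputs_stored :: "nat \<Rightarrow> (nat \<Rightarrow> real) \<Rightarrow> bool" where
  "outputs_stored i m \<longleftrightarrow> (\<forall>i'<i. m (R + i') = real (greedy n t p (\<lambda>j. c j + d j) i'))"

definition rank_inv :: "nat \<Rightarrow> (nat \<Rightarrow> real) \<Rightarrow> bool" where
  "rank_inv i m \<longleftrightarrow> m 0 = real n \<and> m 2 = 0 \<and> m 3 = 1 \<and> m 4 = real (B + i) \<and> m 5 = real (B + n) \<and>
     m 6 = real (n + n) \<and> m 13 = real (R + i) \<and> m 14 = real (B + (n + n) + n) \<and> m 15 = real B \<and>
     input_copied m \<and> outputs_stored i m"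

lemma rank_inv_registers:
  assumes "rank_inv i m"
  shows "m 0 = real n" "m 2 = 0" "m 3 = 1" "m 4 = real (B + i)" "m 5 = real (B + n)"
    "m 6 = real (n + n)" "m 13 = real (R + i)" "m 14 = real (B + (n + n) + n)" "m 15 = real B"
  using assms unfolding rank_inv_def by auto

lemma copy_inv_input_copied:
  assumes P: "copy_inv k m" and ek: "E \<le> 4 + k"
  shows "input_copied m"
proof -
  have copied: "m (B + b) = init_mem (4 + b)" if "b < k" for b
    using P that unfolding copy_inv_def by auto
  show ?thesis
    unfolding input_copied_def
  proof (intro conjI allI impI)
    fix b assume b: "b < n"
    then have "b < k" "b + n < k" "b + (n + n) < k"
      using ek by (simp_all add: E_def)
    with b show "m (B + b) = c b" "m (B + b + n) = d b" "m (B + b + (n + n)) = real (t b)"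
      using copied by (simp_all add: init_mem_def encode_def add.assoc)
  next
    fix l assume l: "l < L"
    then have "l + (n + n + n) < k"
      using ek by (simp add: E_def)
    with l show "m (l + (B + (n + n) + n)) = real (p l)"
      using copied[of "l + (n + n + n)"] by (simp add: init_mem_def encode_def add_ac)
  qed
qed

lemma rank_start:
  assumes P: "copy_inv k m" and ek: "E \<le> 4 + k"
  shows "\<exists>m'. reach prog (13, m) 12 (30, m') \<and> rank_inv 0 m'"
proof -
  have rg: "m 0 = real n" "m (Suc 0) = real E" "m 2 = real (B + k)" "m 3 = 1" "m 4 = real (4 + k)"
    using P unfolding copy_inv_def by auto
  have B: "E + 16 = B" and R: "E + E + 12 = R"
    by (simp_all add: B_def R_def)
  show ?thesis
    apply (rule exI, rule conjI)
     apply (simp add: ram_simps scratch_neq rg ek B R del: of_nat_add of_nat_Suc)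
     apply (rule reach_refl)
    using copy_inv_input_copied[OF P ek] unfolding rank_inv_def input_copied_def
    by (simp add: rg scratch_neq outputs_stored_def)
qed

lemma rank_inv_frame:
  assumes "rank_inv i m" "\<And>a. a \<notin> {1, 7, 8, 9, 10, 11, 12} \<Longrightarrow> m' a = m a"
  shows "rank_inv i m'"
proof -
  have "m' r = m r" if "r \<in> {0, 2, 3, 4, 5, 6, 13, 14, 15}" for r
    using assms(2) that by auto
  moreover have "m' a = m a" if "16 \<le> a" for a
    using assms(2) that by auto
  ultimately show ?thesis
    using assms(1) B_ge_16 R_ge_16 unfolding rank_inv_def input_copied_def outputs_stored_def by simp
qed

lemma rank_inv_next:
  assumes P: "rank_inv i m" and fr: "\<And>a. a \<notin> {4, 11, 13, R + i} \<Longrightarrow> m' a = m a"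
    and "m' (R + i) = real (greedy n t p (\<lambda>j. c j + d j) i)"
    and "m' 4 = real (B + Suc i)" "m' 13 = real (R + Suc i)"
  shows "rank_inv (Suc i) m'"
proof -
  have below_R: "m' a = m a" if "16 \<le> a" "a < R" for a
    using that by (intro fr) auto
  have "input_copied m'"
    using P B_ge_16 address_bounds below_R unfolding rank_inv_def input_copied_def by simp
  moreover have "m' (R + i') = m (R + i')" if "i' < i" for i'
    using that R_ge_16 by (intro fr) auto
  then have "outputs_stored (Suc i) m'"
    using P assms(3) unfolding rank_inv_def outputs_stored_def by (auto simp: less_Suc_eq)
  moreover have "m' r = m r" if "r \<in> {0, 2, 3, 5, 6, 14, 15}" for r
    using that R_ge_16 by (intro fr) auto
  ultimately show ?thesis
    using P assms(4,5) unfolding rank_inv_def by simp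
qed

definition partial_rank :: "nat \<Rightarrow> nat \<Rightarrow> nat" where
  "partial_rank i j = card {k \<in> part n t (t i). k < j \<and> (c k + d k, k) < (c i + d i, i)}"

lemma partial_rank_0: "partial_rank i 0 = 0"
  by (simp add: partial_rank_def)

lemma partial_rank_Suc:
  "partial_rank i (Suc j) =
     partial_rank i j + (if j < n \<and> t j = t i \<and> (c j + d j, j) < (c i + d i, i) then 1 else 0)"
proof -
  let ?S = "\<lambda>j. {k \<in> part n t (t i). k < j \<and> (c k + d k, k) < (c i + d i, i)}"
  have "?S (Suc j) = ?S j \<union> (if j < n \<and> t j = t i \<and> (c j + d j, j) < (c i + d i, i) then {j} else {})"
    by (auto simp: part_def less_Suc_eq)
  then show ?thesis
    unfolding partial_rank_def by (simp add: card_insert_if)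
qed

lemma partial_rank_n: "partial_rank i n = rank_in (part n t (t i)) (\<lambda>j. (c j + d j, j)) i"
proof -
  have "{k \<in> part n t (t i). k < n \<and> (c k + d k, k) < (c i + d i, i)}
      = {k \<in> part n t (t i). (c k + d k, k) < (c i + d i, i)}"
    by (auto simp: part_def)
  then show ?thesis
    unfolding partial_rank_def rank_in_def by simp
qed

definition scan_inv :: "nat \<Rightarrow> nat \<Rightarrow> (nat \<Rightarrow> real) \<Rightarrow> bool" where
  "scan_inv i j m \<longleftrightarrow> rank_inv i m \<and> m 7 = c i + d i \<and> m 8 = real (t i) \<and> m 9 = real (B + j) \<and>
     m 10 = real (partial_rank i j)"

lemma scan_start:
  assumes P: "rank_inv i m" and i: "i < n"
  shows "\<exists>m'. reach prog (30, m) 9 (39, m') \<and> scan_inv i 0 m'"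
proof -
  have input: "m (B + i) = c i" "m (B + i + n) = d i" "m (B + i + (n + n)) = real (t i)"
    using P i unfolding rank_inv_def input_copied_def by auto
  have ni: "\<not> n \<le> i"
    using i by simp
  show ?thesis
    apply (rule exI, rule conjI)
     apply (simp add: ram_simps scratch_neq rank_inv_registers[OF P] input ni del: of_nat_add of_nat_Suc)
     apply (rule reach_refl)
    unfolding scan_inv_def by (auto intro: rank_inv_frame[OF P] simp: partial_rank_0)
qed

lemma scan_inv_update:
  assumes "scan_inv i j m" "\<And>a. a \<notin> {9, 10, 11, 12} \<Longrightarrow> m' a = m a"
    "m' 9 = real (B + Suc j)" "m' 10 = real (partial_rank i (Suc j))"
  shows "scan_inv i (Suc j) m'"
  using assms rank_inv_frame[of i m m'] unfolding scan_inv_def by auto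

lemma scan_inv_registers:
  assumes "scan_inv i j m" "j < n"
  shows "m 7 = c i + d i" "m 8 = real (t i)" "m 9 = real (B + j)" "m 10 = real (partial_rank i j)"
    "m (B + j) = c j" "m (B + j + n) = d j" "m (B + j + (n + n)) = real (t j)"
  using assms unfolding scan_inv_def rank_inv_def input_copied_def by auto

lemma scan_step_other_part:
  assumes j: "j < n" and S: "scan_inv i j m" and "t j \<noteq> t i"
  shows "\<exists>m'. reach_within prog (39, m) 14 (39, m') \<and> scan_inv i (Suc j) m'"
proof -
  have P: "rank_inv i m"
    using S by (simp add: scan_inv_def)
  have nj: "\<not> n \<le> j"
    using j by simp
  note rg = scan_inv_registers[OF S j]
  note facts = ram_simps scratch_neq rank_inv_registers[OF P] rg nj
  consider (a) "t j < t i" | (b) "t i < t j"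
    using \<open>t j \<noteq> t i\<close> by linarith
  then show ?thesis
  proof cases
    case a
    then have h: "t j \<le> t i" "\<not> t i \<le> t j" by auto
    show ?thesis
      apply (rule ex_reach_imp_ex_reach_within[where s = 8], rule exI, rule conjI)
       apply (simp add: facts h del: of_nat_add of_nat_Suc)
       apply (rule reach_refl)
      using a rg by (intro scan_inv_update[OF S]) (auto simp: partial_rank_Suc)
  next
    case b
    then have h: "\<not> t j \<le> t i" by auto
    show ?thesis
      apply (rule ex_reach_imp_ex_reach_within[where s = 7], rule exI, rule conjI)
       apply (simp add: facts h del: of_nat_add of_nat_Suc)
       apply (rule reach_refl)
      using b rg by (intro scan_inv_update[OF S]) (auto simp: partial_rank_Suc)
  qed
qed

lemma scan_step_same_part:
  assumes j: "j < n" and S: "scan_inv i j m" and tji: "t j = t i"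
  shows "\<exists>m'. reach_within prog (39, m) 14 (39, m') \<and> scan_inv i (Suc j) m'"
proof -
  have P: "rank_inv i m"
    using S by (simp add: scan_inv_def)
  have nj: "\<not> n \<le> j"
    using j by simp
  note rg = scan_inv_registers[OF S j]
  note facts = ram_simps scratch_neq rank_inv_registers[OF P] rg nj
  consider (c) "j < i" "c j + d j \<le> c i + d i" | (d) "j < i" "\<not> c j + d j \<le> c i + d i"
    | (e) "\<not> j < i" "c i + d i \<le> c j + d j" | (f) "\<not> j < i" "\<not> c i + d i \<le> c j + d j"
    by linarith
  then show ?thesis
  proof cases
    case c
    then have h: "\<not> i \<le> j" by auto
    show ?thesis
      apply (rule ex_reach_imp_ex_reach_within[where s = 14], rule exI, rule conjI)
       apply (simp add: facts tji h c del: of_nat_add of_nat_Suc)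
       apply (rule reach_refl)
      using c j tji rg by (intro scan_inv_update[OF S]) (auto simp: partial_rank_Suc)
  next
    case d
    then have h: "\<not> i \<le> j" by auto
    show ?thesis
      apply (rule ex_reach_imp_ex_reach_within[where s = 14], rule exI, rule conjI)
       apply (simp add: facts tji h d del: of_nat_add of_nat_Suc)
       apply (rule reach_refl)
      using d j tji rg by (intro scan_inv_update[OF S]) (auto simp: partial_rank_Suc)
  next
    case e
    then have h: "i \<le> j" by auto
    show ?thesis
      apply (rule ex_reach_imp_ex_reach_within[where s = 13], rule exI, rule conjI)
       apply (simp add: facts tji h e del: of_nat_add of_nat_Suc)
       apply (rule reach_refl)
      using e j tji rg by (intro scan_inv_update[OF S]) (auto simp: partial_rank_Suc)
  next
    case f
    then have h: "i \<le> j" by auto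
    show ?thesis
      apply (rule ex_reach_imp_ex_reach_within[where s = 14], rule exI, rule conjI)
       apply (simp add: facts tji h f del: of_nat_add of_nat_Suc)
       apply (rule reach_refl)
      using f j tji rg by (intro scan_inv_update[OF S]) (auto simp: partial_rank_Suc)
  qed
qed

lemma scan_step:
  assumes "j < n" "scan_inv i j m"
  shows "\<exists>m'. reach_within prog (39, m) 14 (39, m') \<and> scan_inv i (Suc j) m'"
  using scan_step_other_part[OF assms] scan_step_same_part[OF assms] by blast

lemma scan_finish:
  assumes S: "scan_inv i n m" and i: "i < n"
  shows "\<exists>m'. reach_within prog (39, m) 9 (30, m') \<and> rank_inv (Suc i) m'"
proof -
  have P: "rank_inv i m" and rg: "m 8 = real (t i)" "m 9 = real (B + n)"
    "m 10 = real (partial_rank i n)"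
    using S unfolding scan_inv_def by auto
  have "t i < L"
    using valid i unfolding valid_instance_def by blast
  then have "m (t i + (B + (n + n) + n)) = real (p (t i))"
    using S unfolding scan_inv_def rank_inv_def input_copied_def by auto
  note facts = ram_simps scratch_neq rank_inv_registers[OF P] rg this
  have x: "greedy n t p (\<lambda>j. c j + d j) i = (if partial_rank i n < p (t i) then 1 else 0)"
    using i by (simp add: greedy_def partial_rank_n)
  show ?thesis
  proof (cases "p (t i) \<le> partial_rank i n")
    case True
    show ?thesis
      apply (rule ex_reach_imp_ex_reach_within[where s = 8], rule exI, rule conjI)
       apply (simp add: facts True del: of_nat_add of_nat_Suc)
       apply (rule reach_refl)
      using True x R_ge_16 by (intro rank_inv_next[OF P]) (simp_all add: scratch_neq)
  next
    case False
    show ?thesis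
      apply (rule ex_reach_imp_ex_reach_within[where s = 9], rule exI, rule conjI)
       apply (simp add: facts False del: of_nat_add of_nat_Suc)
       apply (rule reach_refl)
      using False x R_ge_16 by (intro rank_inv_next[OF P]) (simp_all add: scratch_neq)
  qed
qed

lemma rank_step:
  assumes i: "i < n" and P: "rank_inv i m"
  shows "\<exists>m'. reach_within prog (30, m) (n * 14 + 18) (30, m') \<and> rank_inv (Suc i) m'"
proof -
  obtain m1 where r1: "reach prog (30, m) 9 (39, m1)" and m1: "scan_inv i 0 m1"
    using scan_start[OF P i] by blast
  obtain m2 where r2: "reach_within prog (39, m1) (n * 14) (39, m2)" and m2: "scan_inv i n m2"
    using reach_within_loop[OF scan_step m1] by blast
  obtain m3 where r3: "reach_within prog (39, m2) 9 (30, m3)" and m3: "rank_inv (Suc i) m3"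
    using scan_finish[OF m2 i] by blast
  have "reach_within prog (30, m) (9 + n * 14 + 9) (30, m3)"
    using reach_within_trans[OF reach_within_trans[OF reach_imp_reach_within[OF r1 order_refl] r2] r3] .
  then have "reach_within prog (30, m) (n * 14 + 18) (30, m3)"
    by (rule reach_within_mono) simp
  with m3 show ?thesis
    by blast
qed

definition output_inv :: "nat \<Rightarrow> (nat \<Rightarrow> real) \<Rightarrow> bool" where
  "output_inv q m \<longleftrightarrow> m 0 = real (R + q) \<and> m 1 = real (q + 4) \<and> m 3 = 1 \<and> m 4 = 4 \<and> q < n \<and>
     (\<forall>i\<le>q. m (R + i) = real (greedy n t p (\<lambda>j. c j + d j) i)) \<and>
     (\<forall>i. q < i \<longrightarrow> i < n \<longrightarrow> m (i + 4) = real (greedy n t p (\<lambda>j. c j + d j) i))"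

lemma output_start:
  assumes P: "rank_inv n m" and n: "n = Suc n'"
  shows "\<exists>m'. reach prog (30, m) 6 (71, m') \<and> output_inv n' m'"
proof -
  note rg = rank_inv_registers[OF P]
  have "\<forall>i<n. m (R + i) = real (greedy n t p (\<lambda>j. c j + d j) i)"
    using P unfolding rank_inv_def outputs_stored_def by auto
  then show ?thesis
    apply (intro exI conjI)
     apply (simp add: ram_simps rg n del: of_nat_add of_nat_Suc)
     apply (rule reach_refl)
    unfolding output_inv_def using n n_plus_4_less_R rg by auto
qed

lemma output_step:
  assumes P: "output_inv (Suc q) m"
  shows "\<exists>m'. reach prog (71, m) 6 (71, m') \<and> output_inv q m'"
proof -
  have rg: "m 0 = real (R + Suc q)" "m (Suc 0) = real (Suc q + 4)" "m 3 = 1" "m 4 = 4" "Suc q < n"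
    using P unfolding output_inv_def by auto
  have out: "m (R + Suc q) = real (greedy n t p (\<lambda>j. c j + d j) (Suc q))"
    using P unfolding output_inv_def by auto
  show ?thesis
    apply (rule exI, rule conjI)
     apply (simp add: ram_simps rg out del: of_nat_add of_nat_Suc)
     apply (rule reach_refl)
    unfolding output_inv_def
    using P n_plus_4_less_R rg out unfolding output_inv_def by (auto simp: less_Suc_eq)
qed

lemma output_finish:
  assumes P: "output_inv 0 m"
  shows "\<exists>m'. reach prog (71, m) 4 (80, m') \<and>
           (\<forall>i<n. m' (4 + i) = real (greedy n t p (\<lambda>j. c j + d j) i))"
proof -
  have rg: "m 0 = real R" "m (Suc 0) = 4" "m 3 = 1" "m 4 = 4"
    and out0: "m R = real (greedy n t p (\<lambda>j. c j + d j) 0)"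
    and out: "\<forall>i. 0 < i \<longrightarrow> i < n \<longrightarrow> m (i + 4) = real (greedy n t p (\<lambda>j. c j + d j) i)"
    using P unfolding output_inv_def by auto
  show ?thesis
    apply (rule exI, rule conjI)
     apply (simp add: ram_simps rg out0 del: of_nat_add of_nat_Suc)
     apply (rule reach_refl)
    using out out0 by (auto simp: add.commute gr0_conv_Suc)
qed

lemma output_phase:
  assumes P: "rank_inv n m"
  shows "\<exists>m'. reach_within prog (30, m) (6 * n + 10) (80, m') \<and>
           (\<forall>i<n. m' (4 + i) = real (greedy n t p (\<lambda>j. c j + d j) i))"
proof (cases n)
  case 0
  have "reach prog (30, m) 2 (80, m)"
    by (simp add: ram_simps rank_inv_registers[OF P] 0 reach_refl del: of_nat_add of_nat_Suc)
  with 0 show ?thesis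
    using reach_imp_reach_within[of prog "(30, m)" 2 "(80, m)" 10] by auto
next
  case (Suc n')
  obtain m1 where r1: "reach prog (30, m) 6 (71, m1)" and m1: "output_inv n' m1"
    using output_start[OF P Suc] by blast
  have "\<exists>m'. reach_within prog (71, m1) (n' * 6) (71, m') \<and> output_inv (n' - n') m'"
  proof (rule reach_within_loop[where I = "\<lambda>k. output_inv (n' - k)"])
    fix k m assume "k < n'" "output_inv (n' - k) m"
    then have "output_inv (Suc (n' - Suc k)) m"
      by (simp add: Suc_diff_Suc)
    then show "\<exists>m'. reach_within prog (71, m) 6 (71, m') \<and> output_inv (n' - Suc k) m'"
      by (intro ex_reach_imp_ex_reach_within[OF output_step]) simp_all
  qed (simp add: m1)
  then obtain m2 where r2: "reach_within prog (71, m1) (n' * 6) (71, m2)" and m2: "output_inv 0 m2"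
    by auto
  obtain m3 where r3: "reach prog (71, m2) 4 (80, m3)"
    and out: "\<forall>i<n. m3 (4 + i) = real (greedy n t p (\<lambda>j. c j + d j) i)"
    using output_finish[OF m2] by blast
  have "reach_within prog (30, m) (6 + n' * 6 + 4) (80, m3)"
    using reach_within_trans[OF reach_within_trans[OF reach_imp_reach_within[OF r1 order_refl] r2]
        reach_imp_reach_within[OF r3 order_refl]] .
  then have "reach_within prog (30, m) (6 * n + 10) (80, m3)"
    by (rule reach_within_mono) (simp add: Suc)
  with out show ?thesis
    by blast
qed

lemma L_le_n: "L \<le> n"
proof -
  have "{..<L} \<subseteq> t ` {..<n}"
    using valid unfolding valid_instance_def part_def by fastforce
  then have "card {..<L} \<le> card (t ` {..<n})"
    by (intro card_mono) auto
  also have "\<dots> \<le> n"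
    using card_image_le[of "{..<n}" t] by simp
  finally show ?thesis
    by simp
qed

lemma prog_computes_greedy:
  "\<exists>mf. reach_within prog (0, init_mem) (60 * (n + 1) ^ 2) (80, mf) \<and>
     (\<forall>i<n. mf (4 + i) = real (greedy n t p (\<lambda>j. c j + d j) i))"
proof -
  obtain m1 k where r1: "reach_within prog (0, init_mem) (6 * E + 13) (13, m1)"
    and m1: "copy_inv k m1" "E \<le> 4 + k"
    using copy_phase by blast
  obtain m2 where r2: "reach prog (13, m1) 12 (30, m2)" and m2: "rank_inv 0 m2"
    using rank_start[OF m1] by blast
  obtain m3 where r3: "reach_within prog (30, m2) (n * (n * 14 + 18)) (30, m3)" and m3: "rank_inv n m3"
    using reach_within_loop[OF rank_step m2] by blast
  obtain mf where r4: "reach_within prog (30, m3) (6 * n + 10) (80, mf)"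
    and out: "\<forall>i<n. mf (4 + i) = real (greedy n t p (\<lambda>j. c j + d j) i)"
    using output_phase[OF m3] by blast
  have "reach_within prog (0, init_mem) (6 * E + 13 + 12 + n * (n * 14 + 18) + (6 * n + 10)) (80, mf)"
    by (intro reach_within_trans[OF _ r4] reach_within_trans[OF _ r3]
        reach_within_trans[OF r1 reach_imp_reach_within[OF r2 order_refl]])
  moreover have "6 * E + 13 + 12 + n * (n * 14 + 18) + (6 * n + 10) \<le> 60 * (n + 1) ^ 2"
    using L_le_n by (simp add: E_def power2_eq_square algebra_simps)
  ultimately show ?thesis
    using out reach_within_mono by blast
qed

lemma prog_finds_optimum:
  assumes "all_equal n c \<or> all_equal n d"
  shows "\<exists>pc m. run prog (60 * (n + 1) ^ 2) (0, encode n L t p G G' c d) = Some (pc, m) \<and>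
    halted prog (pc, m) \<and> (\<forall>i<n. m (4 + i) \<in> {0, 1}) \<and>
    optimal n L t p G G' c d (\<lambda>i. if i < n then nat \<lfloor>m (4 + i)\<rfloor> else 0)"
proof -
  obtain mf where r: "reach_within prog (0, init_mem) (60 * (n + 1) ^ 2) (80, mf)"
    and out: "\<forall>i<n. mf (4 + i) = real (greedy n t p (\<lambda>j. c j + d j) i)"
    using prog_computes_greedy by blast
  have halted: "halted prog (80, mf)"
    by (simp add: halted_def)
  have "(\<lambda>i. if i < n then nat \<lfloor>mf (4 + i)\<rfloor> else 0) = greedy n t p (\<lambda>j. c j + d j)"
    using out by (auto simp: greedy_def fun_eq_iff)
  moreover have "\<forall>i<n. mf (4 + i) \<in> {0, 1}"
    using out by (simp add: greedy_def)
  ultimately show ?thesis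
    using run_reach_within[OF r halted] greedy_optimal[OF valid assms] halted
    unfolding init_mem_def by auto
qed

end

theorem theorem4:
  shows "\<exists>(P :: instr list) (k :: nat) (C :: nat).
    \<forall>n L t p G G' c d.
      valid_instance n L t p c d \<and> (all_equal n c \<or> all_equal n d) \<longrightarrow>
      (\<exists>pc m. run P (C * (n + 1) ^ k) (0, encode n L t p G G' c d) = Some (pc, m) \<and>
         halted P (pc, m) \<and>
         (\<forall>i<n. m (4 + i) \<in> {0, 1}) \<and>
         optimal n L t p G G' c d (\<lambda>i. if i < n then nat \<lfloor>m (4 + i)\<rfloor> else 0))"
  by (rule exI[of _ prog], rule exI[of _ 2], rule exI[of _ 60])
    (use selection_instance.prog_finds_optimum selection_instance.intro in blast)

end
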